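(* Let $P$ be a finite point set and $C$ a convex body in the plane, and let $\Pi$ be a convex polygon with $P\cap C\subseteq\Pi\subseteq C$. Then there is a convex polygon $\Pi'$ such that (A) $P\cap C\subseteq\Pi'\subseteq\Pi$; (B) the number of vertices of $\Pi'$ is at most twice the number of vertices of $\Pi$; and (C) every edge of $\Pi'$ lies on a line passing through two points of $P$. *)

theory Defs
  imports "HOL-Analysis.Analysis"
begin

definition convex_body :: "(real^2) set \<Rightarrow> bool" where
  "convex_body C \<longleftrightarrow> compact C \<and> convex C \<and> interior C \<noteq> {}"

text \<open>A convex polygon: the convex hull of a finite point set (degenerate cases allowed).\<close>
definition convex_polygon :: "(real^2) set \<Rightarrow> bool" where
  "convex_polygon K \<longleftrightarrow> (\<exists>S. finite S \<and> K = convex hull S)"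

definition vertices :: "(real^2) set \<Rightarrow> (real^2) set" where
  "vertices K = {v. v extreme_point_of K}"

definition edges :: "(real^2) set \<Rightarrow> (real^2) set set" where
  "edges K = {F. F face_of K \<and> aff_dim F = 1}"

end

theory Submission
  imports Defs
begin

(* Let S = P \<inter> C and K its convex hull. If K has dimension at most one, K itself will do.
   Otherwise K is the intersection of the half-planes of its edges, each bounded by a line
   through two points of S. For each edge half-plane h of Q, Helly's theorem in the plane,
   applied to the half-planes of K together with the complement of h, yields two half-planes
   of K whose intersection already lies in h. The intersection Q' of the at most 2e selected
   half-planes (e the number of edges of Q) lies between K and Q, and its edges lie on
   selected lines. A convex polygon has as many vertices as edges, so Q' has at most 2e
   vertices while Q has e. *)

lemma card_eq_card_if_biregular:
  assumes "finite A" "finite B" "m > 0"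
    and "\<And>a. a \<in> A \<Longrightarrow> card {b \<in> B. R a b} = m"
    and "\<And>b. b \<in> B \<Longrightarrow> card {a \<in> A. R a b} = m"
  shows "card A = card B"
proof -
  have "m * card A = (\<Sum>a\<in>A. card {b \<in> B. R a b})" using assms(4) by simp
  also have "\<dots> = (\<Sum>a\<in>A. \<Sum>b\<in>B. if R a b then 1 else 0)"
    using assms(2) by (simp add: sum.If_cases Int_def)
  also have "\<dots> = (\<Sum>b\<in>B. \<Sum>a\<in>A. if R a b then 1 else 0)" by (rule sum.swap)
  also have "\<dots> = (\<Sum>b\<in>B. card {a \<in> A. R a b})"
    using assms(1) by (simp add: sum.If_cases Int_def)
  also have "\<dots> = m * card B" using assms(5) by simp
  finally show ?thesis using assms(3) by simp
qed

lemma card_extreme_points_aff_dim_le_1: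
  fixes S :: "'a::euclidean_space set"
  assumes "compact S" "convex S" "aff_dim S \<le> 1"
  shows "card {v. v extreme_point_of S} = nat (aff_dim S + 1)"
proof (cases "S = {}")
  case False
  then obtain a b where S: "S = closed_segment a b"
    using compact_convex_collinear_segment assms collinear_aff_dim by metis
  then have "{v. v extreme_point_of S} = {a, b}"
    by (auto simp: extreme_point_of_segment)
  then show ?thesis by (simp add: S segment_convex_hull aff_dim_convex_hull)
qed simp

lemma halfspace_le_subset_if_hyperplane_eq:
  fixes a c :: "'a::real_inner"
  assumes hyp: "{x. a \<bullet> x = b} = {x. c \<bullet> x = d}" and "a \<bullet> z < b" "c \<bullet> z < d"
  shows "{x. a \<bullet> x \<le> b} \<subseteq> {x. c \<bullet> x \<le> d}"
proof
  fix y assume "y \<in> {x. a \<bullet> x \<le> b}"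
  then have y: "a \<bullet> y \<le> b" by simp
  show "y \<in> {x. c \<bullet> x \<le> d}"
  proof (rule ccontr)
    assume "y \<notin> {x. c \<bullet> x \<le> d}"
    then have "c \<bullet> y > d" by simp
    define t where "t = (d - c \<bullet> z) / (c \<bullet> y - c \<bullet> z)"
    have t: "0 < t" "t < 1"
      using \<open>c \<bullet> y > d\<close> \<open>c \<bullet> z < d\<close> by (auto simp: t_def field_simps)
    define w where "w = z + t *\<^sub>R (y - z)"
    have "c \<bullet> w = c \<bullet> z + t * (c \<bullet> y - c \<bullet> z)"
      by (simp add: w_def inner_diff_right algebra_simps)
    also have "\<dots> = d"
      using \<open>c \<bullet> y > d\<close> \<open>c \<bullet> z < d\<close> by (simp add: t_def)
    finally have "c \<bullet> w = d" .
    then have "a \<bullet> w = b" using hyp by blast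
    moreover have "a \<bullet> w = (1 - t) * (a \<bullet> z) + t * (a \<bullet> y)"
      by (simp add: w_def inner_diff_right algebra_simps)
    moreover have "(1 - t) * (a \<bullet> z) + t * (a \<bullet> y) < (1 - t) * b + t * b"
      using t y \<open>a \<bullet> z < b\<close> by (intro add_less_le_mono mult_left_mono) auto
    ultimately show False by (simp add: algebra_simps)
  qed
qed

lemma supporting_halfspace_of_facet_unique:
  fixes S :: "'a::euclidean_space set"
  assumes "aff_dim S = DIM('a)" "F facet_of S" "a \<noteq> 0" "c \<noteq> 0"
    and "S \<subseteq> {x. a \<bullet> x \<le> b}" "S \<subseteq> {x. c \<bullet> x \<le> d}"
    and "F \<subseteq> {x. a \<bullet> x = b}" "F \<subseteq> {x. c \<bullet> x = d}"
  shows "{x. a \<bullet> x \<le> b} = {x. c \<bullet> x \<le> d}"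
proof -
  have "F \<noteq> {}" and dimF: "aff_dim F = DIM('a) - 1"
    using assms(1,2) by (auto simp: facet_of_def)
  have hull_eq: "affine hull F = {x. e \<bullet> x = f}" if "e \<noteq> 0" "F \<subseteq> {x. e \<bullet> x = f}" for e f
  proof (rule affine_dim_equal)
    show "affine hull F \<subseteq> {x. e \<bullet> x = f}"
      using that by (intro hull_minimal) (auto simp: affine_hyperplane)
    show "aff_dim (affine hull F) = aff_dim {x. e \<bullet> x = f}"
      using that dimF by (simp add: aff_dim_hyperplane)
  qed (use \<open>F \<noteq> {}\<close> in \<open>auto simp: affine_hyperplane\<close>)
  have hyp: "{x. a \<bullet> x = b} = {x. c \<bullet> x = d}"
    using hull_eq[OF assms(3,7)] hull_eq[OF assms(4,8)] by simp
  obtain z where "z \<in> S" "a \<bullet> z \<noteq> b"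
  proof -
    have "\<not> S \<subseteq> {x. a \<bullet> x = b}"
      using aff_dim_subset[of S "{x. a \<bullet> x = b}"] assms(1,3) by (auto simp: aff_dim_hyperplane)
    then show ?thesis using that by blast
  qed
  then have "a \<bullet> z < b" "c \<bullet> z < d"
    using assms(5,6) hyp by (fastforce simp: set_eq_iff)+
  then show ?thesis
    using hyp halfspace_le_subset_if_hyperplane_eq by (metis subset_antisym)
qed

lemma polyhedron_minimal_facet_halfspaces:
  fixes S :: "'a::euclidean_space set"
  assumes "polyhedron S" "aff_dim S = DIM('a)"
  obtains F a b where "finite F" "S = \<Inter>F"
    "\<And>h. h \<in> F \<Longrightarrow> a h \<noteq> 0 \<and> h = {x. a h \<bullet> x \<le> b h}"
    "\<And>h. h \<in> F \<Longrightarrow> S \<inter> {x. a h \<bullet> x = b h} facet_of S"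
    "card F \<le> card {C. C facet_of S}"
proof -
  obtain F where F: "finite F" "S = affine hull S \<inter> \<Inter>F"
      "\<forall>h\<in>F. \<exists>a b. a \<noteq> 0 \<and> h = {x. a \<bullet> x \<le> b}"
      "\<forall>F'. F' \<subset> F \<longrightarrow> S \<subset> affine hull S \<inter> \<Inter>F'"
    using assms(1) unfolding polyhedron_Int_affine_minimal by blast
  then obtain a b where ab: "\<And>h. h \<in> F \<Longrightarrow> a h \<noteq> 0 \<and> h = {x. a h \<bullet> x \<le> b h}"
    by metis
  have "affine hull S = UNIV"
    using assms(2) aff_dim_eq_full by blast
  then have SF: "S = \<Inter>F" using F(2) by simp
  have facet: "C facet_of S \<longleftrightarrow> (\<exists>h. h \<in> F \<and> C = S \<inter> {x. a h \<bullet> x = b h})" for C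
    using facet_of_polyhedron_explicit[OF F(1,2) ab] F(4) by blast
  have "inj_on (\<lambda>h. S \<inter> {x. a h \<bullet> x = b h}) F"
  proof (rule inj_onI)
    fix h h' assume h: "h \<in> F" "h' \<in> F" and eq: "S \<inter> {x. a h \<bullet> x = b h} = S \<inter> {x. a h' \<bullet> x = b h'}"
    have "{x. a h \<bullet> x \<le> b h} = {x. a h' \<bullet> x \<le> b h'}"
    proof (rule supporting_halfspace_of_facet_unique[OF assms(2)])
      show "S \<inter> {x. a h \<bullet> x = b h} facet_of S" using facet h by blast
      show "a h \<noteq> 0" "a h' \<noteq> 0" using ab h by blast+
      show "S \<subseteq> {x. a h \<bullet> x \<le> b h}" "S \<subseteq> {x. a h' \<bullet> x \<le> b h'}"
        using ab h SF by blast+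
      show "S \<inter> {x. a h \<bullet> x = b h} \<subseteq> {x. a h \<bullet> x = b h}"
        "S \<inter> {x. a h \<bullet> x = b h} \<subseteq> {x. a h' \<bullet> x = b h'}"
        using eq by blast+
    qed
    then show "h = h'" using ab h by metis
  qed
  moreover have "(\<lambda>h. S \<inter> {x. a h \<bullet> x = b h}) ` F \<subseteq> {C. C facet_of S}"
    using facet by blast
  ultimately have "card F \<le> card {C. C facet_of S}"
    using card_inj_on_le finite_polyhedron_facets[OF assms(1)] by blast
  then show ?thesis
    using that F(1) SF ab facet by blast
qed

lemma Inter_minimal_subfamily:
  assumes "finite H"
  obtains H' where "H' \<subseteq> H" "A \<inter> \<Inter>H' = A \<inter> \<Inter>H"
    "\<And>H''. H'' \<subset> H' \<Longrightarrow> A \<inter> \<Inter>H \<subset> A \<inter> \<Inter>H''"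
proof -
  let ?M = "{H'. H' \<subseteq> H \<and> A \<inter> \<Inter>H' = A \<inter> \<Inter>H}"
  have "finite ?M" using assms by (simp add: finite_subset[of _ "Pow H"] subset_eq)
  then obtain H' where H': "H' \<subseteq> H" "A \<inter> \<Inter>H' = A \<inter> \<Inter>H"
    and min: "\<And>H''. H'' \<in> ?M \<Longrightarrow> H'' \<le> H' \<Longrightarrow> H' = H''"
    using finite_has_minimal2[of ?M H] by auto
  have "A \<inter> \<Inter>H \<subset> A \<inter> \<Inter>H''" if "H'' \<subset> H'" for H''
  proof (rule psubsetI)
    have "\<Inter>H' \<subseteq> \<Inter>H''" using that by (simp add: Inf_superset_mono less_imp_le)
    then show "A \<inter> \<Inter>H \<subseteq> A \<inter> \<Inter>H''" using H'(2) by auto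
    have "H'' \<notin> ?M" using min that by (metis less_imp_le less_irrefl)
    then show "A \<inter> \<Inter>H \<noteq> A \<inter> \<Inter>H''" using H'(1) that by auto
  qed
  with H' show ?thesis by (rule that)
qed

lemma facets_of_Inter_halfspaces:
  fixes H :: "'a::euclidean_space set set"
  assumes "finite H" "\<And>h. h \<in> H \<Longrightarrow> a h \<noteq> 0 \<and> h = {x. a h \<bullet> x \<le> b h}"
    and "C facet_of \<Inter>H"
  obtains h where "h \<in> H" "C = \<Inter>H \<inter> {x. a h \<bullet> x = b h}"
proof -
  let ?S = "\<Inter>H"
  obtain H' where H': "H' \<subseteq> H" "affine hull ?S \<inter> \<Inter>H' = affine hull ?S \<inter> ?S"
      and min: "\<And>H''. H'' \<subset> H' \<Longrightarrow> affine hull ?S \<inter> ?S \<subset> affine hull ?S \<inter> \<Inter>H''"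
    using Inter_minimal_subfamily[OF assms(1), of "affine hull ?S"] by metis
  have "affine hull ?S \<inter> ?S = ?S" by (simp add: Int_absorb1 hull_subset)
  then have S: "?S = affine hull ?S \<inter> \<Inter>H'" using H'(2) by simp
  have "finite H'" using H'(1) assms(1) by (rule finite_subset)
  moreover have "\<And>h. h \<in> H' \<Longrightarrow> a h \<noteq> 0 \<and> h = {x. a h \<bullet> x \<le> b h}"
    using H'(1) assms(2) by (meson subsetD)
  moreover have "\<And>H''. H'' \<subset> H' \<Longrightarrow> ?S \<subset> affine hull ?S \<inter> \<Inter>H''"
    using min \<open>affine hull ?S \<inter> ?S = ?S\<close> by simp
  ultimately obtain h where "h \<in> H'" "C = ?S \<inter> {x. a h \<bullet> x = b h}"
    using facet_of_polyhedron_explicit[OF _ S] assms(3) by metis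
  with H'(1) show ?thesis by (intro that) auto
qed

lemma Helly_Inter_subset:
  fixes F :: "'a::euclidean_space set set"
  assumes "finite F" "\<And>h. h \<in> F \<Longrightarrow> convex h" "\<Inter>F \<noteq> {}" "\<Inter>F \<subseteq> X" "convex (- X)"
  obtains T where "T \<subseteq> F" "card T \<le> DIM('a)" "\<Inter>T \<subseteq> X"
proof (cases "card F \<le> DIM('a)")
  case True
  then show ?thesis using that assms(4) by blast
next
  case False
  let ?G = "insert (- X) F"
  have "DIM('a) + 1 \<le> card ?G"
    using False assms(1) card_insert_le[of F "- X"] by linarith
  moreover have "\<forall>s\<in>?G. convex s" using assms(2,5) by blast
  moreover have "\<Inter>?G = {}" using assms(4) by auto
  ultimately obtain t where t: "t \<subseteq> ?G" "card t = DIM('a) + 1" "\<Inter>t = {}"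
    using Helly[of ?G] by metis
  have "- X \<in> t"
  proof (rule ccontr)
    assume "- X \<notin> t"
    then have "\<Inter>F \<subseteq> \<Inter>t" using t(1) by blast
    then show False using t(3) assms(3) by blast
  qed
  show ?thesis
  proof (rule that)
    show "t - {- X} \<subseteq> F" using t(1) by blast
    show "card (t - {- X}) \<le> DIM('a)" using t(2) \<open>- X \<in> t\<close> by simp
    show "\<Inter>(t - {- X}) \<subseteq> X" using t(3) \<open>- X \<in> t\<close> by auto
  qed
qed

lemma Helly_selection:
  fixes F G :: "'a::euclidean_space set set"
  assumes "finite F" "\<And>h. h \<in> F \<Longrightarrow> convex h" "\<Inter>F \<noteq> {}"
    and "finite G" "\<And>g. g \<in> G \<Longrightarrow> convex (- g)" "\<Inter>F \<subseteq> \<Inter>G"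
  obtains H where "H \<subseteq> F" "card H \<le> DIM('a) * card G" "\<Inter>H \<subseteq> \<Inter>G"
proof -
  have "\<exists>T. T \<subseteq> F \<and> card T \<le> DIM('a) \<and> \<Inter>T \<subseteq> g" if "g \<in> G" for g
  proof -
    have "\<Inter>F \<subseteq> g" using assms(6) that by blast
    then show ?thesis
      using Helly_Inter_subset[OF assms(1-3) _ assms(5)[OF that]] by metis
  qed
  then obtain T where T: "\<And>g. g \<in> G \<Longrightarrow> T g \<subseteq> F \<and> card (T g) \<le> DIM('a) \<and> \<Inter>(T g) \<subseteq> g"
    by metis
  show ?thesis
  proof (rule that)
    show "(\<Union>g\<in>G. T g) \<subseteq> F" using T by blast
    have "card (\<Union>g\<in>G. T g) \<le> (\<Sum>g\<in>G. card (T g))" using assms(4) by (rule card_UN_le)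
    also have "\<dots> \<le> (\<Sum>g\<in>G. DIM('a))" using T by (intro sum_mono) auto
    finally show "card (\<Union>g\<in>G. T g) \<le> DIM('a) * card G" by (simp add: mult.commute)
    show "\<Inter>(\<Union>g\<in>G. T g) \<subseteq> \<Inter>G"
    proof
      fix x assume "x \<in> \<Inter>(\<Union>g\<in>G. T g)"
      then have "x \<in> \<Inter>(T g)" if "g \<in> G" for g using that by blast
      then show "x \<in> \<Inter>G" using T by blast
    qed
  qed
qed

definition cross2 :: "real^2 \<Rightarrow> real^2 \<Rightarrow> real" where
  "cross2 u w = u$1 * w$2 - u$2 * w$1"

lemma Lagrange_identity_2:
  fixes a d e :: "real^2"
  shows "(d \<bullet> d) * (a \<bullet> e) = (a \<bullet> d) * (d \<bullet> e) + cross2 d a * cross2 d e"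
  by (simp add: inner_vec_def sum_2 cross2_def) algebra

lemma cross2_antisym: "cross2 u w = - cross2 w u"
  by (simp add: cross2_def)

lemma cross2_normals_opposite:
  fixes a d a' d' :: "real^2"
  assumes "a \<bullet> d = 0" "a' \<bullet> d' = 0" "a \<bullet> d' < 0" "a' \<bullet> d < 0"
  shows "cross2 d a * cross2 d' a' < 0"
proof -
  define c where "c = cross2 d d'"
  have "d \<noteq> 0" "d' \<noteq> 0" using assms(3,4) by auto
  then have "d \<bullet> d > 0" "d' \<bullet> d' > 0" by auto
  moreover have "(d \<bullet> d) * (a \<bullet> d') = cross2 d a * c"
    using Lagrange_identity_2[of d a d'] assms(1) by (simp add: c_def)
  moreover have "(d' \<bullet> d') * (a' \<bullet> d) = - (cross2 d' a' * c)"
    using Lagrange_identity_2[of d' a' d] assms(2) cross2_antisym[of d' d] by (simp add: c_def)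
  ultimately have "cross2 d a * c < 0" "cross2 d' a' * c > 0"
    using assms(3,4) by (metis mult_pos_neg neg_less_0_iff_less)+
  then show ?thesis by (auto simp: mult_less_0_iff zero_less_mult_iff)
qed

lemma aff_dim_Int_facets_less:
  fixes S :: "'a::euclidean_space set"
  assumes "convex S" "F facet_of S" "G facet_of S" "F \<noteq> G"
  shows "aff_dim (F \<inter> G) < aff_dim F"
proof -
  have faces: "F face_of S" "G face_of S" using assms(2,3) facet_of_imp_face_of by blast+
  then have "F \<inter> G face_of F"
    by (meson face_of_Int face_of_imp_subset face_of_subset inf_le1)
  moreover have "F \<inter> G \<noteq> F"
  proof
    assume "F \<inter> G = F"
    then have "F face_of G" using faces by (metis face_of_imp_subset face_of_subset inf.orderI)
    then have "aff_dim F < aff_dim G"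
      using face_of_aff_dim_lt[OF face_of_imp_convex[OF faces(2)]] assms(4) by blast
    then show False using assms(2,3) by (simp add: facet_of_def)
  qed
  ultimately show ?thesis
    using face_of_aff_dim_lt[OF face_of_imp_convex[OF faces(1)]] by blast
qed

lemma polygon_facets_Int_subsingleton:
  fixes Q :: "(real^2) set"
  assumes "convex Q" "aff_dim Q = 2" "F facet_of Q" "G facet_of Q" "F \<noteq> G"
    and "x \<in> F \<inter> G" "y \<in> F \<inter> G"
  shows "x = y"
proof -
  have "aff_dim {x, y} \<le> aff_dim (F \<inter> G)"
    using assms(6,7) by (intro aff_dim_subset) auto
  also have "\<dots> < aff_dim F" by (rule aff_dim_Int_facets_less[OF assms(1,3-5)])
  also have "\<dots> = 1" using assms(2,3) by (simp add: facet_of_def)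
  finally show ?thesis by (simp split: if_splits)
qed

lemma polygon_facet_supporting_line:
  fixes Q :: "(real^2) set"
  assumes "polytope Q" "aff_dim Q = 2" "F facet_of Q" "v \<in> F"
  obtains a b u where "Q \<subseteq> {x. a \<bullet> x \<le> b}" "F = Q \<inter> {x. a \<bullet> x = b}" "u \<in> F" "u \<noteq> v"
proof -
  obtain a b where ab: "Q \<subseteq> {x. a \<bullet> x \<le> b}" "F = Q \<inter> {x. a \<bullet> x = b}"
    using facet_of_polyhedron[OF polytope_imp_polyhedron[OF assms(1)] assms(3)] by metis
  have "aff_dim F = 1" using assms(2,3) by (simp add: facet_of_def)
  then have "\<not> F \<subseteq> {v}" using aff_dim_subset[of F "{v}"] by auto
  then obtain u where "u \<in> F" "u \<noteq> v" by blast
  with ab show ?thesis by (rule that)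
qed

lemma polygon_facet_strict_side:
  fixes Q :: "(real^2) set"
  assumes "convex Q" "aff_dim Q = 2" "F facet_of Q" "G facet_of Q" "F \<noteq> G"
    and "Q \<subseteq> {x. a \<bullet> x \<le> b}" "F = Q \<inter> {x. a \<bullet> x = b}"
    and "v \<in> F \<inter> G" "w \<in> G" "w \<noteq> v"
  shows "a \<bullet> (w - v) < 0"
proof -
  have "w \<in> Q" using assms(4,9) facet_of_imp_subset by blast
  then have "a \<bullet> w \<le> b" using assms(6) by blast
  moreover have "a \<bullet> v = b" using assms(7,8) by blast
  moreover have "a \<bullet> w \<noteq> b"
  proof
    assume "a \<bullet> w = b"
    then have "w \<in> F \<inter> G" using assms(7,9) \<open>w \<in> Q\<close> by blast
    then show False
      using polygon_facets_Int_subsingleton[OF assms(1-5) _ assms(8)] assms(10) by blast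
  qed
  ultimately show ?thesis by (simp add: inner_diff_right)
qed

lemma polygon_facets_cross2_opposite:
  fixes Q :: "(real^2) set"
  assumes "convex Q" "aff_dim Q = 2" "F facet_of Q" "G facet_of Q" "F \<noteq> G"
    and "Q \<subseteq> {x. a \<bullet> x \<le> b}" "F = Q \<inter> {x. a \<bullet> x = b}"
    and "Q \<subseteq> {x. c \<bullet> x \<le> d}" "G = Q \<inter> {x. c \<bullet> x = d}"
    and "v \<in> F \<inter> G" "u \<in> F" "u \<noteq> v" "w \<in> G" "w \<noteq> v"
  shows "cross2 (u - v) a * cross2 (w - v) c < 0"
proof (rule cross2_normals_opposite)
  show "a \<bullet> (u - v) = 0" using assms(7,10,11) by (auto simp: inner_diff_right)
  show "c \<bullet> (w - v) = 0" using assms(9,10,13) by (auto simp: inner_diff_right)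
  show "a \<bullet> (w - v) < 0"
    by (rule polygon_facet_strict_side[OF assms(1-7,10,13,14)])
  show "c \<bullet> (u - v) < 0"
    using polygon_facet_strict_side[OF assms(1,2,4,3) _ assms(8,9) _ assms(11,12)] assms(5,10) by blast
qed

lemma card_polygon_facets_containing_le_2:
  fixes Q :: "(real^2) set"
  assumes "polytope Q" "aff_dim Q = 2"
  shows "card {F. F facet_of Q \<and> v \<in> F} \<le> 2"
proof (rule ccontr)
  let ?X = "{F. F facet_of Q \<and> v \<in> F}"
  assume "\<not> ?thesis"
  then have "3 \<le> card ?X" by simp
  then obtain T where T: "T \<subseteq> ?X" "card T = 3" by (rule obtain_subset_with_card_n)
  then obtain F1 F2 F3 where "T = {F1, F2, F3}" "F1 \<noteq> F2" "F2 \<noteq> F3" "F1 \<noteq> F3"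
    unfolding card_3_iff by metis
  then have F: "F1 facet_of Q" "F2 facet_of Q" "F3 facet_of Q" "v \<in> F1" "v \<in> F2" "v \<in> F3"
    and neq: "F1 \<noteq> F2" "F2 \<noteq> F3" "F1 \<noteq> F3"
    using T(1) by auto
  obtain a1 b1 u1 where
    F1: "Q \<subseteq> {x. a1 \<bullet> x \<le> b1}" "F1 = Q \<inter> {x. a1 \<bullet> x = b1}" "u1 \<in> F1" "u1 \<noteq> v"
    using polygon_facet_supporting_line[OF assms F(1,4)] by blast
  obtain a2 b2 u2 where
    F2: "Q \<subseteq> {x. a2 \<bullet> x \<le> b2}" "F2 = Q \<inter> {x. a2 \<bullet> x = b2}" "u2 \<in> F2" "u2 \<noteq> v"
    using polygon_facet_supporting_line[OF assms F(2,5)] by blast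
  obtain a3 b3 u3 where
    F3: "Q \<subseteq> {x. a3 \<bullet> x \<le> b3}" "F3 = Q \<inter> {x. a3 \<bullet> x = b3}" "u3 \<in> F3" "u3 \<noteq> v"
    using polygon_facet_supporting_line[OF assms F(3,6)] by blast
  \<comment> \<open>The sign of \<open>cross2 (u - v) a\<close> records whether the facet leaves \<open>v\<close> clockwise or
    counterclockwise; distinct facets through \<open>v\<close> have opposite signs, impossible for three.\<close>
  define m1 m2 m3
    where "m1 = cross2 (u1 - v) a1" "m2 = cross2 (u2 - v) a2" "m3 = cross2 (u3 - v) a3"
  note opposite = polygon_facets_cross2_opposite[OF polytope_imp_convex[OF assms(1)] assms(2)]
  have v: "v \<in> F1 \<inter> F2" "v \<in> F1 \<inter> F3" "v \<in> F2 \<inter> F3" using F by auto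
  have "m1 * m2 < 0" unfolding m1_m2_m3_def
    by (rule opposite[OF F(1,2) neq(1) F1(1,2) F2(1,2) v(1) F1(3,4) F2(3,4)])
  moreover have "m1 * m3 < 0" unfolding m1_m2_m3_def
    by (rule opposite[OF F(1,3) neq(3) F1(1,2) F3(1,2) v(2) F1(3,4) F3(3,4)])
  moreover have "m2 * m3 < 0" unfolding m1_m2_m3_def
    by (rule opposite[OF F(2,3) neq(2) F2(1,2) F3(1,2) v(3) F2(3,4) F3(3,4)])
  ultimately have "(m1 * m2) * (m1 * m3) * (m2 * m3) < 0"
    by (simp add: mult_neg_neg mult_pos_neg)
  moreover have "(m1 * m2) * (m1 * m3) * (m2 * m3) = (m1 * m2 * m3)\<^sup>2"
    by (simp add: power2_eq_square)
  ultimately show False by simp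
qed

lemma card_polygon_facets_containing_ge_2:
  fixes Q :: "(real^2) set"
  assumes "polytope Q" "aff_dim Q = 2" "v extreme_point_of Q"
  shows "2 \<le> card {F. F facet_of Q \<and> v \<in> F}"
proof (rule ccontr)
  let ?X = "{F. F facet_of Q \<and> v \<in> F}"
  assume "\<not> ?thesis"
  then have card: "card ?X \<le> Suc 0" by simp
  have "finite ?X"
    using finite_polytope_facets[OF assms(1)] by (rule rev_finite_subset) auto
  have "{v} face_of Q" "{v} \<noteq> Q" using assms(2,3) face_of_singleton by auto
  then have "{v} = \<Inter>{F. F facet_of Q \<and> {v} \<subseteq> F}"
    using face_of_polyhedron[OF polytope_imp_polyhedron[OF assms(1)]] by blast
  then have v: "{v} = \<Inter>?X" by simp
  have "?X \<noteq> {}"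
  proof
    assume "?X = {}"
    then have "Q \<subseteq> {v}" using v by auto
    then show False using aff_dim_subset[of Q "{v}"] assms(2) by simp
  qed
  then obtain F where "F \<in> ?X" by blast
  then have "?X = {F}" using card \<open>finite ?X\<close> card_le_Suc0_iff_eq by blast
  then have "F = {v}" "F facet_of Q" using v by auto
  then show False using assms(2) by (simp add: facet_of_def)
qed

lemma card_polygon_extreme_points_eq_card_facets:
  fixes Q :: "(real^2) set"
  assumes "polytope Q" "aff_dim Q = 2"
  shows "card {v. v extreme_point_of Q} = card {F. F facet_of Q}"
proof (rule card_eq_card_if_biregular[where m = 2 and R = "\<lambda>v F. v \<in> F"])
  show "finite {v. v extreme_point_of Q}"
    using finite_polyhedron_extreme_points[OF polytope_imp_polyhedron[OF assms(1)]] .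
  show "finite {F. F facet_of Q}" using finite_polytope_facets[OF assms(1)] .
  show "0 < (2::nat)" by simp
next
  fix v assume "v \<in> {v. v extreme_point_of Q}"
  then show "card {F \<in> {F. F facet_of Q}. v \<in> F} = 2"
    using card_polygon_facets_containing_le_2[OF assms] card_polygon_facets_containing_ge_2[OF assms]
    by (simp add: le_antisym)
next
  fix F assume "F \<in> {F. F facet_of Q}"
  then have F: "F face_of Q" "aff_dim F = 1"
    using assms(2) by (auto simp: facet_of_def)
  then have "polytope F" using face_of_polytope_polytope assms(1) by blast
  have "{v \<in> {v. v extreme_point_of Q}. v \<in> F} = {v. v extreme_point_of F}"
    using extreme_point_of_face[OF F(1)] by blast
  also have "card \<dots> = 2"
    using card_extreme_points_aff_dim_le_1[of F] F(2) \<open>polytope F\<close>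
    by (simp add: polytope_imp_compact polytope_imp_convex)
  finally show "card {v \<in> {v. v extreme_point_of Q}. v \<in> F} = 2" .
qed

lemma hyperplane_eq_affine_hull_pair:
  fixes a p q :: "real^2"
  assumes "a \<noteq> 0" "p \<noteq> q" "a \<bullet> p = b" "a \<bullet> q = b"
  shows "{x. a \<bullet> x = b} = affine hull {p, q}"
proof (rule affine_dim_equal[symmetric])
  show "affine hull {p, q} \<subseteq> {x. a \<bullet> x = b}"
    using assms by (intro hull_minimal) (auto simp: affine_hyperplane)
  show "aff_dim (affine hull {p, q}) = aff_dim {x. a \<bullet> x = b}"
    using assms by (simp add: aff_dim_hyperplane)
qed (auto simp: affine_hyperplane)

lemma affine_hull_eq_affine_hull_pair:
  fixes S :: "'a::euclidean_space set"
  assumes "aff_dim S = 1"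
  obtains p q where "p \<in> S" "q \<in> S" "p \<noteq> q" "affine hull S = affine hull {p, q}"
proof -
  obtain p where p: "p \<in> S" using assms by fastforce
  have "\<not> S \<subseteq> {p}" using aff_dim_subset[of S "{p}"] assms by auto
  then obtain q where q: "q \<in> S" "q \<noteq> p" by blast
  have eq: "affine hull {p, q} = affine hull S"
  proof (rule affine_dim_equal)
    show "affine hull {p, q} \<subseteq> affine hull S" using p q by (intro hull_mono) auto
    show "aff_dim (affine hull {p, q}) = aff_dim (affine hull S)" using assms q(2) by simp
  qed auto
  show ?thesis using that[OF p q(1) not_sym[OF q(2)]] eq by simp
qed

lemma convex_hull_Inter_halfplanes_through_points:
  fixes S :: "(real^2) set"
  assumes "finite S" "aff_dim (convex hull S) = 2"
  obtains F a b where "finite F" "convex hull S = \<Inter>F"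
    "\<And>h. h \<in> F \<Longrightarrow> a h \<noteq> 0 \<and> h = {x. a h \<bullet> x \<le> b h}"
    "\<And>h. h \<in> F \<Longrightarrow> \<exists>p\<in>S. \<exists>q\<in>S. p \<noteq> q \<and> {x. a h \<bullet> x = b h} = affine hull {p, q}"
proof -
  let ?K = "convex hull S"
  have "polytope ?K" using assms(1) polytope_def by blast
  have "aff_dim ?K = DIM(real^2)" using assms(2) by simp
  then obtain F a b where F: "finite F" "?K = \<Inter>F"
    and ab: "\<And>h. h \<in> F \<Longrightarrow> a h \<noteq> 0 \<and> h = {x. a h \<bullet> x \<le> b h}"
    and facet: "\<And>h. h \<in> F \<Longrightarrow> ?K \<inter> {x. a h \<bullet> x = b h} facet_of ?K"
    and "card F \<le> card {C. C facet_of ?K}"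
    using polyhedron_minimal_facet_halfspaces[OF polytope_imp_polyhedron[OF \<open>polytope ?K\<close>]] by metis
  have "\<exists>p\<in>S. \<exists>q\<in>S. p \<noteq> q \<and> {x. a h \<bullet> x = b h} = affine hull {p, q}" if h: "h \<in> F" for h
  proof -
    let ?E = "?K \<inter> {x. a h \<bullet> x = b h}"
    have E: "?E face_of ?K" "aff_dim ?E = 1"
      using facet[OF h] assms(2) by (auto simp: facet_of_def)
    then have "polytope ?E" using face_of_polytope_polytope \<open>polytope ?K\<close> by blast
    then have "card {v. v extreme_point_of ?E} = 2"
      using card_extreme_points_aff_dim_le_1[of ?E] E(2)
      by (simp add: polytope_imp_compact polytope_imp_convex)
    then obtain p q where pq: "p \<noteq> q" "p extreme_point_of ?E" "q extreme_point_of ?E"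
      by (auto simp: card_2_iff)
    then have "p extreme_point_of ?K" "q extreme_point_of ?K" "p \<in> ?E" "q \<in> ?E"
      using extreme_point_of_face[OF E(1)] extreme_point_of_def by blast+
    then have "p \<in> S" "q \<in> S" "a h \<bullet> p = b h" "a h \<bullet> q = b h"
      using extreme_points_of_convex_hull[of S] by auto
    then show ?thesis
      using hyperplane_eq_affine_hull_pair[of "a h" p q "b h"] ab[OF h] pq(1) by blast
  qed
  with F ab show ?thesis by (rule that)
qed

lemma polygon_Inter_halfplanes:
  fixes H :: "(real^2) set set"
  assumes "finite H" "\<And>h. h \<in> H \<Longrightarrow> a h \<noteq> 0 \<and> h = {x. a h \<bullet> x \<le> b h}"
    and "bounded (\<Inter>H)" "aff_dim (\<Inter>H) = 2"
  shows "polytope (\<Inter>H)" and "card {v. v extreme_point_of \<Inter>H} \<le> card H"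
proof -
  have "polyhedron (\<Inter>H)"
    using assms(1,2) by (metis polyhedron_Inter polyhedron_halfspace_le)
  then show "polytope (\<Inter>H)"
    using assms(3) by (simp add: polytope_eq_bounded_polyhedron)
  then have "card {v. v extreme_point_of \<Inter>H} = card {C. C facet_of \<Inter>H}"
    using assms(4) by (rule card_polygon_extreme_points_eq_card_facets)
  also have "\<dots> \<le> card ((\<lambda>h. \<Inter>H \<inter> {x. a h \<bullet> x = b h}) ` H)"
  proof (intro card_mono subsetI)
    fix C assume "C \<in> {C. C facet_of \<Inter>H}"
    then obtain h where "h \<in> H" "C = \<Inter>H \<inter> {x. a h \<bullet> x = b h}"
      using facets_of_Inter_halfspaces[OF assms(1,2)] by (metis mem_Collect_eq)
    then show "C \<in> (\<lambda>h. \<Inter>H \<inter> {x. a h \<bullet> x = b h}) ` H" by blast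
  qed (use assms(1) in simp)
  also have "\<dots> \<le> card H" by (rule card_image_le[OF assms(1)])
  finally show "card {v. v extreme_point_of \<Inter>H} \<le> card H" .
qed

lemma Helly_selection_polygon:
  fixes F :: "(real^2) set set"
  assumes "finite F" "\<And>h. h \<in> F \<Longrightarrow> convex h" "\<Inter>F \<noteq> {}"
    and "polytope Q" "aff_dim Q = 2" "\<Inter>F \<subseteq> Q"
  obtains H where "H \<subseteq> F" "card H \<le> 2 * card {v. v extreme_point_of Q}" "\<Inter>H \<subseteq> Q"
proof -
  have "aff_dim Q = DIM(real^2)" using assms(5) by simp
  then obtain G a b where G: "finite G" "Q = \<Inter>G"
    and ab: "\<And>g. g \<in> G \<Longrightarrow> a g \<noteq> 0 \<and> g = {x. a g \<bullet> x \<le> b g}"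
    and card_G: "card G \<le> card {C. C facet_of Q}"
    using polyhedron_minimal_facet_halfspaces[OF polytope_imp_polyhedron[OF assms(4)]] by metis
  have "convex (- g)" if g: "g \<in> G" for g
  proof -
    obtain c d where "g = {x. c \<bullet> x \<le> d}" using ab[OF g] by blast
    then have "- g = {x. c \<bullet> x > d}" by auto
    then show ?thesis by (simp add: convex_halfspace_gt)
  qed
  then obtain H where H: "H \<subseteq> F" "card H \<le> DIM(real^2) * card G" "\<Inter>H \<subseteq> \<Inter>G"
    using Helly_selection[OF assms(1-3) G(1)] assms(6) G(2) by metis
  have "card H \<le> 2 * card {v. v extreme_point_of Q}"
    using H(2) card_G card_polygon_extreme_points_eq_card_facets[OF assms(4,5)] by simp
  with H(1,3) G(2) show ?thesis by (intro that) auto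
qed

lemma polygon_edges_through_points_full_dim:
  fixes S Q :: "(real^2) set"
  assumes "finite S" "polytope Q" "S \<subseteq> Q" "aff_dim (convex hull S) = 2"
  obtains Q' where "polytope Q'" "S \<subseteq> Q'" "Q' \<subseteq> Q"
    "card {v. v extreme_point_of Q'} \<le> 2 * card {v. v extreme_point_of Q}"
    "\<And>E. E facet_of Q' \<Longrightarrow> \<exists>p\<in>S. \<exists>q\<in>S. p \<noteq> q \<and> E \<subseteq> affine hull {p, q}"
proof -
  let ?K = "convex hull S"
  obtain F a b where F: "finite F" "?K = \<Inter>F"
    and ab: "\<And>h. h \<in> F \<Longrightarrow> a h \<noteq> 0 \<and> h = {x. a h \<bullet> x \<le> b h}"
    and lines: "\<And>h. h \<in> F \<Longrightarrow> \<exists>p\<in>S. \<exists>q\<in>S. p \<noteq> q \<and> {x. a h \<bullet> x = b h} = affine hull {p, q}"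
    using convex_hull_Inter_halfplanes_through_points[OF assms(1,4)] by metis
  have "?K \<subseteq> Q"
    using assms(2,3) by (simp add: hull_minimal polytope_imp_convex)
  then have "aff_dim Q = 2"
    using aff_dim_subset[of ?K Q] aff_dim_le_DIM[of Q] assms(4) by simp
  have "convex h" if "h \<in> F" for h using ab[OF that] convex_halfspace_le by metis
  moreover have "\<Inter>F \<noteq> {}" using F(2) assms(4) by auto
  ultimately obtain H where H: "H \<subseteq> F" "card H \<le> 2 * card {v. v extreme_point_of Q}" "\<Inter>H \<subseteq> Q"
    using Helly_selection_polygon[OF F(1) _ _ assms(2) \<open>aff_dim Q = 2\<close>] F(2) \<open>?K \<subseteq> Q\<close> by metis
  have "finite H" using H(1) F(1) by (rule finite_subset)
  have abH: "\<And>h. h \<in> H \<Longrightarrow> a h \<noteq> 0 \<and> h = {x. a h \<bullet> x \<le> b h}"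
    using H(1) ab by (meson subsetD)
  have "?K \<subseteq> \<Inter>H" using F(2) H(1) by blast
  then have "aff_dim (\<Inter>H) = 2"
    using aff_dim_subset[of ?K "\<Inter>H"] aff_dim_le_DIM[of "\<Inter>H"] assms(4) by simp
  moreover have "bounded (\<Inter>H)"
    using H(3) assms(2) polytope_imp_bounded bounded_subset by blast
  ultimately have "polytope (\<Inter>H)" "card {v. v extreme_point_of \<Inter>H} \<le> card H"
    using polygon_Inter_halfplanes[OF \<open>finite H\<close> abH] by blast+
  moreover have "S \<subseteq> \<Inter>H" using \<open>?K \<subseteq> \<Inter>H\<close> hull_subset[of S convex] by blast
  moreover have "\<exists>p\<in>S. \<exists>q\<in>S. p \<noteq> q \<and> E \<subseteq> affine hull {p, q}" if E: "E facet_of \<Inter>H" for E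
  proof -
    obtain h where "h \<in> H" "E = \<Inter>H \<inter> {x. a h \<bullet> x = b h}"
      using facets_of_Inter_halfspaces[OF \<open>finite H\<close> abH E] by metis
    then show ?thesis using lines[of h] H(1) by blast
  qed
  ultimately show ?thesis using that[of "\<Inter>H"] H(2,3) by auto
qed

lemma convex_polygon_iff_polytope: "convex_polygon K \<longleftrightarrow> polytope K"
  by (simp add: convex_polygon_def polytope_def)

lemma convex_polygon_edges_through_points_collinear:
  fixes S Q :: "(real^2) set"
  assumes "finite S" "convex_polygon Q" "S \<subseteq> Q" "aff_dim (convex hull S) \<le> 1"
  shows "card (vertices (convex hull S)) \<le> 2 * card (vertices Q)"
    and "\<forall>E\<in>edges (convex hull S). \<exists>p\<in>S. \<exists>q\<in>S. p \<noteq> q \<and> E \<subseteq> affine hull {p, q}"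
proof -
  have Q: "polytope Q" using assms(2) by (simp add: convex_polygon_iff_polytope)
  have "compact (convex hull S)" "convex (convex hull S)"
    using assms(1) by (simp_all add: finite_imp_compact_convex_hull)
  then have card_le_2: "card (vertices (convex hull S)) \<le> 2"
    using card_extreme_points_aff_dim_le_1[of "convex hull S"] assms(4)
    by (simp add: vertices_def nat_le_iff)
  show "card (vertices (convex hull S)) \<le> 2 * card (vertices Q)"
  proof (cases "S = {}")
    case False
    then obtain v where "v extreme_point_of Q"
      using extreme_point_exists_convex[of Q] assms(3) Q
      by (auto simp: polytope_imp_compact polytope_imp_convex)
    moreover have "finite (vertices Q)"
      using finite_polyhedron_extreme_points[OF polytope_imp_polyhedron[OF Q]]
      by (simp add: vertices_def)
    ultimately have "card (vertices Q) > 0"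
      by (auto simp: card_gt_0_iff vertices_def)
    then show ?thesis using card_le_2 by linarith
  qed (simp add: vertices_def)
  show "\<forall>E\<in>edges (convex hull S). \<exists>p\<in>S. \<exists>q\<in>S. p \<noteq> q \<and> E \<subseteq> affine hull {p, q}"
  proof
    fix E assume "E \<in> edges (convex hull S)"
    then have E: "E \<subseteq> convex hull S" "aff_dim E = 1"
      by (auto simp: edges_def face_of_imp_subset)
    then have "aff_dim S = 1"
      using aff_dim_subset[of E "convex hull S"] assms(4) by (simp add: aff_dim_convex_hull)
    then obtain p q where "p \<in> S" "q \<in> S" "p \<noteq> q" "affine hull S = affine hull {p, q}"
      by (rule affine_hull_eq_affine_hull_pair)
    moreover have "E \<subseteq> affine hull S" using E(1) convex_hull_subset_affine_hull by blast
    ultimately show "\<exists>p\<in>S. \<exists>q\<in>S. p \<noteq> q \<and> E \<subseteq> affine hull {p, q}" by auto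
  qed
qed

lemma convex_polygon_edges_through_points:
  fixes S Q :: "(real^2) set"
  assumes "finite S" "convex_polygon Q" "S \<subseteq> Q"
  obtains Q' where "convex_polygon Q'" "S \<subseteq> Q'" "Q' \<subseteq> Q"
    "card (vertices Q') \<le> 2 * card (vertices Q)"
    "\<forall>E\<in>edges Q'. \<exists>p\<in>S. \<exists>q\<in>S. p \<noteq> q \<and> E \<subseteq> affine hull {p, q}"
proof (cases "aff_dim (convex hull S) \<le> 1")
  case True
  have "convex_polygon (convex hull S)" using assms(1) convex_polygon_def by blast
  moreover have "convex hull S \<subseteq> Q"
    using assms(2,3) by (simp add: convex_polygon_iff_polytope hull_minimal polytope_imp_convex)
  ultimately show ?thesis
    using that convex_polygon_edges_through_points_collinear[OF assms True] hull_subset[of S convex]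
    by blast
next
  case False
  then have dim: "aff_dim (convex hull S) = 2"
    using aff_dim_le_DIM[of "convex hull S"] by simp
  obtain Q' where Q': "polytope Q'" "S \<subseteq> Q'" "Q' \<subseteq> Q"
    "card {v. v extreme_point_of Q'} \<le> 2 * card {v. v extreme_point_of Q}"
    "\<And>E. E facet_of Q' \<Longrightarrow> \<exists>p\<in>S. \<exists>q\<in>S. p \<noteq> q \<and> E \<subseteq> affine hull {p, q}"
    using polygon_edges_through_points_full_dim[OF assms(1) _ assms(3) dim] assms(2)
    by (metis convex_polygon_iff_polytope)
  have "convex hull S \<subseteq> Q'"
    using Q'(2) polytope_imp_convex[OF Q'(1)] by (rule hull_minimal)
  then have "aff_dim Q' = 2"
    using aff_dim_subset[of "convex hull S" Q'] aff_dim_le_DIM[of Q'] dim by simp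
  then have "E facet_of Q'" if "E \<in> edges Q'" for E
    using that by (auto simp: edges_def facet_of_def)
  then show ?thesis
    using Q' by (intro that[of Q']) (auto simp: convex_polygon_iff_polytope vertices_def)
qed

theorem lemma3p4:
  fixes P C Q :: "(real^2) set"
  assumes "finite P"
    and "convex_body C"
    and "convex_polygon Q"
    and "P \<inter> C \<subseteq> Q" and "Q \<subseteq> C"
  shows "\<exists>Q'. convex_polygon Q'
      \<and> P \<inter> C \<subseteq> Q' \<and> Q' \<subseteq> Q
      \<and> card (vertices Q') \<le> 2 * card (vertices Q)
      \<and> (\<forall>E \<in> edges Q'. \<exists>p\<in>P. \<exists>q\<in>P. p \<noteq> q \<and> E \<subseteq> affine hull {p, q})"
proof -
  obtain Q' where "convex_polygon Q'" "P \<inter> C \<subseteq> Q'" "Q' \<subseteq> Q"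
    "card (vertices Q') \<le> 2 * card (vertices Q)"
    and edges: "\<forall>E\<in>edges Q'. \<exists>p\<in>P \<inter> C. \<exists>q\<in>P \<inter> C. p \<noteq> q \<and> E \<subseteq> affine hull {p, q}"
    by (rule convex_polygon_edges_through_points[OF finite_Int[OF disjI1[OF assms(1)]] assms(3,4)])
  moreover have "\<forall>E\<in>edges Q'. \<exists>p\<in>P. \<exists>q\<in>P. p \<noteq> q \<and> E \<subseteq> affine hull {p, q}"
    using edges by blast
  ultimately show ?thesis by blast
qed

end
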